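(* Let $X$ be a compact Hausdorff space and $\varphi:X\to X$ a continuous surjection. Then the canonical homeomorphism extension $(\tilde X,\tilde\varphi)$ of $(X,\varphi)$ is minimal.
   Context: A system $(Y,\psi)$ ($Y$ compact Hausdorff, $\psi$ a continuous surjection) is an extension of $(X,\varphi)$ if there is a continuous surjection $p:Y\to X$ (the extension map) with $p\circ\psi=\varphi\circ p$; if $p$ is a homeomorphism it is a conjugacy, and the systems are conjugate. A homeomorphism extension is an extension in which $\psi$ is a homeomorphism. The canonical homeomorphism extension: $\tilde X=\{(x_1,x_2,\dots)\in\prod_{n\ge1}X : x_n=\varphi(x_{n+1})\ \forall n\}$ with product topology, $\tilde\varphi(x_1,x_2,\dots)=(\varphi(x_1),x_1,x_2,\dots)$, extension map $p(x_1,x_2,\dots)=x_1$. A homeomorphism extension $(Y,\psi)$ of $(X,\varphi)$ is minimal if whenever $(Z,\sigma)$ is a homeomorphism extension of $(X,\varphi)$ and $(Y,\psi)$ is an extension of $(Z,\sigma)$ such that the composition of the extension map of $Z$ over $X$ with the extension map of $Y$ over $Z$ equals the extension map of $Y$ over $X$, then $(Y,\psi)$ and $(Z,\sigma)$ are conjugate. *)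

theory Defs
  imports "HOL-Analysis.Analysis"
begin

definition dyn_system :: "'a topology \<Rightarrow> ('a \<Rightarrow> 'a) \<Rightarrow> bool" where
  "dyn_system X f \<longleftrightarrow> compact_space X \<and> Hausdorff_space X \<and>
     continuous_map X X f \<and> f ` topspace X = topspace X"

definition is_extension :: "'b topology \<Rightarrow> ('b \<Rightarrow> 'b) \<Rightarrow> 'a topology \<Rightarrow> ('a \<Rightarrow> 'a) \<Rightarrow> ('b \<Rightarrow> 'a) \<Rightarrow> bool" where
  "is_extension Y g X f p \<longleftrightarrow> dyn_system Y g \<and> dyn_system X f \<and>
     continuous_map Y X p \<and> p ` topspace Y = topspace X \<and>
     (\<forall>y\<in>topspace Y. p (g y) = f (p y))"

definition homeo_extension :: "'b topology \<Rightarrow> ('b \<Rightarrow> 'b) \<Rightarrow> 'a topology \<Rightarrow> ('a \<Rightarrow> 'a) \<Rightarrow> ('b \<Rightarrow> 'a) \<Rightarrow> bool" where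
  "homeo_extension Y g X f p \<longleftrightarrow> is_extension Y g X f p \<and> homeomorphic_map Y Y g"

definition conjugate :: "'b topology \<Rightarrow> ('b \<Rightarrow> 'b) \<Rightarrow> 'a topology \<Rightarrow> ('a \<Rightarrow> 'a) \<Rightarrow> bool" where
  "conjugate Y g X f \<longleftrightarrow> (\<exists>p. is_extension Y g X f p \<and> homeomorphic_map Y X p)"

text \<open>Minimal homeomorphism extension, tested against all homeomorphism
  extensions (Z,s) whose carrier type is 'z (the type is an explicit parameter;
  a theorem with 'z free holds for all carrier types).\<close>
definition minimal_homeo_extension ::
  "'z itself \<Rightarrow> 'b topology \<Rightarrow> ('b \<Rightarrow> 'b) \<Rightarrow> 'a topology \<Rightarrow> ('a \<Rightarrow> 'a) \<Rightarrow> ('b \<Rightarrow> 'a) \<Rightarrow> bool" where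
  "minimal_homeo_extension (_::'z itself) Y g X f p \<longleftrightarrow> homeo_extension Y g X f p \<and>
     (\<forall>(Z::'z topology) s q r.
        homeo_extension Z s X f q \<and> is_extension Y g Z s r \<and>
        (\<forall>y\<in>topspace Y. q (r y) = p y) \<longrightarrow> conjugate Y g Z s)"

text \<open>Canonical homeomorphism extension (sequences indexed from 0 instead of 1).\<close>
definition canon_space :: "'a topology \<Rightarrow> ('a \<Rightarrow> 'a) \<Rightarrow> (nat \<Rightarrow> 'a) topology" where
  "canon_space X f = subtopology (product_topology (\<lambda>_. X) UNIV)
     {x. (\<forall>n. x n \<in> topspace X) \<and> (\<forall>n. x n = f (x (Suc n)))}"

definition canon_map :: "('a \<Rightarrow> 'a) \<Rightarrow> (nat \<Rightarrow> 'a) \<Rightarrow> (nat \<Rightarrow> 'a)" where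
  "canon_map f x = (\<lambda>n. case n of 0 \<Rightarrow> f (x 0) | Suc m \<Rightarrow> x m)"

definition canon_proj :: "(nat \<Rightarrow> 'a) \<Rightarrow> 'a" where
  "canon_proj x = x 0"

end

theory Submission
  imports Defs
begin

text \<open>The inverse limit is a closed, hence compact, subspace of the Hausdorff product, and
  \<open>canon_map f\<close> is a continuous bijection on it, hence a homeomorphism. For minimality, let the
  inverse limit factor through a homeomorphism extension \<open>(Z, s)\<close> via \<open>r\<close> with \<open>q \<circ> r = canon_proj\<close>.
  Since \<open>canon_map f\<close> sends the \<open>(n+1)\<close>-st tail of a point to its \<open>n\<close>-th tail, \<open>s\<close> is injective
  and \<open>r\<close> intertwines \<open>canon_map f\<close> with \<open>s\<close>, equality \<open>r x = r y\<close> propagates to all tails;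
  applying \<open>q\<close> recovers every coordinate, so \<open>r\<close> is injective and thus a homeomorphism.\<close>

lemma continuous_map_product_coordinate:
  "continuous_map (product_topology (\<lambda>_. X) UNIV) X (\<lambda>x. x k)"
  using continuous_map_product_projection[of k UNIV "\<lambda>_. X"] by simp

text \<open>Oriented as \<open>f (x (Suc n)) = x n\<close>: the orientation of \<open>canon_space_def\<close> makes the
  simplifier loop.\<close>

lemma topspace_canon_space:
  "topspace (canon_space X f) = {x. (\<forall>n. x n \<in> topspace X) \<and> (\<forall>n. f (x (Suc n)) = x n)}"
  unfolding canon_space_def by (auto simp: PiE_UNIV_domain Pi_iff eq_commute[of _ "f _"])

lemma canon_space_eq_subtopology:
  "canon_space X f = subtopology (product_topology (\<lambda>_. X) UNIV) (topspace (canon_space X f))"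
  unfolding canon_space_def topspace_subtopology subtopology_restrict ..

lemma closedin_topspace_canon_space:
  assumes "Hausdorff_space X" and "continuous_map X X f"
  shows "closedin (product_topology (\<lambda>_. X) UNIV) (topspace (canon_space X f))"
proof -
  let ?P = "product_topology (\<lambda>_. X) (UNIV :: nat set)"
  have "closedin ?P {x \<in> topspace ?P. f (x (Suc n)) = x n}" for n
    by (intro closedin_continuous_maps_eq[OF assms(1)] continuous_map_product_coordinate
        continuous_map_compose[of _ X "\<lambda>x. x (Suc n)", unfolded o_def, OF _ assms(2)])
  then have "closedin ?P (\<Inter>n. {x \<in> topspace ?P. f (x (Suc n)) = x n})"
    by (intro closedin_Inter) auto
  moreover have "topspace (canon_space X f) = (\<Inter>n. {x \<in> topspace ?P. f (x (Suc n)) = x n})"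
    by (auto simp: topspace_canon_space PiE_def Pi_def)
  ultimately show ?thesis
    by simp
qed

lemma compact_space_canon_space:
  assumes "compact_space X" and "Hausdorff_space X" and "continuous_map X X f"
  shows "compact_space (canon_space X f)"
proof -
  have "compactin (product_topology (\<lambda>_. X) UNIV) (topspace (canon_space X f))"
    using assms by (intro closedin_compact_space closedin_topspace_canon_space)
      (simp_all add: compact_space_product_topology)
  then show ?thesis
    by (metis canon_space_eq_subtopology compact_space_subtopology)
qed

lemma Hausdorff_space_canon_space:
  assumes "Hausdorff_space X"
  shows "Hausdorff_space (canon_space X f)"
  unfolding canon_space_def
  by (intro Hausdorff_space_subtopology) (simp add: Hausdorff_space_product_topology assms)

definition seq_shift :: "nat \<Rightarrow> (nat \<Rightarrow> 'a) \<Rightarrow> nat \<Rightarrow> 'a" where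
  "seq_shift n x = (\<lambda>k. x (k + n))"

lemma seq_shift_0 [simp]: "seq_shift 0 x = x"
  by (simp add: seq_shift_def)

lemma canon_proj_seq_shift [simp]: "canon_proj (seq_shift n x) = x n"
  by (simp add: seq_shift_def canon_proj_def)

lemma seq_shift_in_canon_space:
  "x \<in> topspace (canon_space X f) \<Longrightarrow> seq_shift n x \<in> topspace (canon_space X f)"
  by (simp add: topspace_canon_space seq_shift_def)

lemma canon_map_seq_shift_Suc:
  "x \<in> topspace (canon_space X f) \<Longrightarrow> canon_map f (seq_shift (Suc n) x) = seq_shift n x"
  by (auto simp: topspace_canon_space seq_shift_def canon_map_def fun_eq_iff split: nat.split)

lemma canon_proj_canon_map: "canon_proj (canon_map f x) = f (canon_proj x)"
  by (simp add: canon_proj_def canon_map_def)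

lemma continuous_map_canon_proj: "continuous_map (canon_space X f) X canon_proj"
  unfolding canon_space_def canon_proj_def
  by (intro continuous_map_from_subtopology continuous_map_product_coordinate)

lemma continuous_map_canon_map:
  assumes "continuous_map X X f"
  shows "continuous_map (canon_space X f) (canon_space X f) (canon_map f)"
proof -
  let ?P = "product_topology (\<lambda>_. X) (UNIV :: nat set)"
  have "continuous_map (canon_space X f) X (\<lambda>x. canon_map f x k)" for k
  proof (cases k)
    case 0
    then show ?thesis
      using continuous_map_compose[OF continuous_map_canon_proj assms]
      by (simp add: canon_map_def canon_proj_def o_def)
  next
    case (Suc m)
    then show ?thesis
      unfolding canon_space_def canon_map_def
      by (simp add: continuous_map_from_subtopology continuous_map_product_coordinate)
  qed
  then have "continuous_map (canon_space X f) ?P (canon_map f)"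
    by (simp add: continuous_map_componentwise_UNIV)
  moreover have "canon_map f \<in> topspace (canon_space X f) \<rightarrow> topspace (canon_space X f)"
    using continuous_map_image_subset_topspace[OF assms]
    by (auto simp: topspace_canon_space canon_map_def image_subset_iff split: nat.split)
  ultimately show ?thesis
    by (metis canon_space_eq_subtopology continuous_map_into_subtopology)
qed

lemma canon_map_image:
  assumes "continuous_map X X f"
  shows "canon_map f ` topspace (canon_space X f) = topspace (canon_space X f)"
proof
  show "canon_map f ` topspace (canon_space X f) \<subseteq> topspace (canon_space X f)"
    using continuous_map_image_subset_topspace[OF continuous_map_canon_map[OF assms]] .
  show "topspace (canon_space X f) \<subseteq> canon_map f ` topspace (canon_space X f)"
  proof
    fix x
    assume x: "x \<in> topspace (canon_space X f)"
    then have "x = canon_map f (seq_shift 1 x)"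
      using canon_map_seq_shift_Suc[OF x, of 0] by simp
    then show "x \<in> canon_map f ` topspace (canon_space X f)"
      using seq_shift_in_canon_space[OF x] by blast
  qed
qed

lemma inj_canon_map: "inj (canon_map f)"
proof (rule injI)
  fix x y
  assume eq: "canon_map f x = canon_map f y"
  have "x n = y n" for n
    using fun_cong[OF eq, of "Suc n"] by (simp add: canon_map_def)
  then show "x = y"
    by (simp add: fun_eq_iff)
qed

lemma dyn_system_canon_space:
  assumes "dyn_system X f"
  shows "dyn_system (canon_space X f) (canon_map f)"
  using assms unfolding dyn_system_def
  by (metis compact_space_canon_space Hausdorff_space_canon_space
      continuous_map_canon_map canon_map_image)

lemma homeomorphic_map_canon_map:
  assumes "dyn_system X f"
  shows "homeomorphic_map (canon_space X f) (canon_space X f) (canon_map f)"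
  using dyn_system_canon_space[OF assms]
  by (auto simp: dyn_system_def intro: continuous_imp_homeomorphic_map inj_on_subset[OF inj_canon_map])

lemma exists_backward_orbit:
  assumes "f ` topspace X = topspace X" and "a \<in> topspace X"
  shows "\<exists>x \<in> topspace (canon_space X f). x 0 = a"
proof -
  have preimage: "\<exists>y. y \<in> topspace X \<and> f y = b" if "b \<in> topspace X" for b
    using that assms(1) by (metis imageE)
  have "\<exists>x. \<forall>n. (x n \<in> topspace X \<and> (n = 0 \<longrightarrow> x n = a)) \<and> f (x (Suc n)) = x n"
    by (rule dependent_nat_choice) (use assms(2) preimage in auto)
  then show ?thesis
    by (auto simp: topspace_canon_space)
qed

lemma canon_proj_image:
  assumes "f ` topspace X = topspace X"
  shows "canon_proj ` topspace (canon_space X f) = topspace X"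
proof
  show "canon_proj ` topspace (canon_space X f) \<subseteq> topspace X"
    by (auto simp: topspace_canon_space canon_proj_def)
  show "topspace X \<subseteq> canon_proj ` topspace (canon_space X f)"
    using exists_backward_orbit[OF assms] by (force simp: canon_proj_def)
qed

lemma homeo_extension_canon_space:
  assumes "dyn_system X f"
  shows "homeo_extension (canon_space X f) (canon_map f) X f canon_proj"
proof -
  have "f ` topspace X = topspace X"
    using assms by (simp add: dyn_system_def)
  then show ?thesis
    using assms dyn_system_canon_space[OF assms] homeomorphic_map_canon_map[OF assms]
    by (simp add: homeo_extension_def is_extension_def continuous_map_canon_proj
        canon_proj_image canon_proj_canon_map)
qed

lemma inj_on_factor_of_canon_space:
  assumes s: "inj_on s Z"
    and r: "r ` topspace (canon_space X f) \<subseteq> Z"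
    and r_comm: "\<And>y. y \<in> topspace (canon_space X f) \<Longrightarrow> r (canon_map f y) = s (r y)"
    and qr: "\<And>y. y \<in> topspace (canon_space X f) \<Longrightarrow> q (r y) = canon_proj y"
  shows "inj_on r (topspace (canon_space X f))"
proof (rule inj_onI)
  have shift_step: "s (r (seq_shift (Suc n) z)) = r (seq_shift n z)"
    if "z \<in> topspace (canon_space X f)" for z n
    using r_comm[OF seq_shift_in_canon_space[OF that, of "Suc n"]] canon_map_seq_shift_Suc[OF that, of n]
    by simp
  fix x y
  assume x: "x \<in> topspace (canon_space X f)" and y: "y \<in> topspace (canon_space X f)"
    and "r x = r y"
  have tails: "r (seq_shift n x) = r (seq_shift n y)" for n
  proof (induction n)
    case 0
    show ?case using \<open>r x = r y\<close> by simp
  next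
    case (Suc n)
    then have "s (r (seq_shift (Suc n) x)) = s (r (seq_shift (Suc n) y))"
      by (simp add: shift_step x y)
    moreover have "r (seq_shift (Suc n) x) \<in> Z" and "r (seq_shift (Suc n) y) \<in> Z"
      using r seq_shift_in_canon_space x y by blast+
    ultimately show ?case
      using s by (simp add: inj_on_eq_iff)
  qed
  have "x n = y n" for n
  proof -
    have "x n = q (r (seq_shift n x))"
      by (simp add: qr seq_shift_in_canon_space x)
    also have "\<dots> = q (r (seq_shift n y))"
      by (simp add: tails)
    also have "\<dots> = y n"
      by (simp add: qr seq_shift_in_canon_space y)
    finally show ?thesis .
  qed
  then show "x = y"
    by (simp add: fun_eq_iff)
qed

theorem lemma1:
  fixes X :: "'a topology" and f :: "'a \<Rightarrow> 'a"
  assumes "compact_space X" and "Hausdorff_space X"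
    and "continuous_map X X f" and "f ` topspace X = topspace X"
  shows "minimal_homeo_extension TYPE('z) (canon_space X f) (canon_map f) X f canon_proj"
  unfolding minimal_homeo_extension_def
proof (intro conjI allI impI)
  have X: "dyn_system X f"
    using assms by (simp add: dyn_system_def)
  then show "homeo_extension (canon_space X f) (canon_map f) X f canon_proj"
    by (rule homeo_extension_canon_space)
  fix Z :: "'z topology" and s q r
  assume "homeo_extension Z s X f q \<and> is_extension (canon_space X f) (canon_map f) Z s r \<and>
    (\<forall>y\<in>topspace (canon_space X f). q (r y) = canon_proj y)"
  then have s: "homeomorphic_map Z Z s" and r: "is_extension (canon_space X f) (canon_map f) Z s r"
    and "\<forall>y\<in>topspace (canon_space X f). q (r y) = canon_proj y"
    unfolding homeo_extension_def by blast+
  then have "inj_on r (topspace (canon_space X f))"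
    by (intro inj_on_factor_of_canon_space[OF homeomorphic_imp_injective_map[OF s]])
      (auto simp: is_extension_def)
  with r have "homeomorphic_map (canon_space X f) Z r"
    using dyn_system_canon_space[OF X]
    by (intro continuous_imp_homeomorphic_map) (simp_all add: is_extension_def dyn_system_def)
  with r show "conjugate (canon_space X f) (canon_map f) Z s"
    unfolding conjugate_def by blast
qed

end
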